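(* Suppose that for every $s\in G$ and every $x_{P(s)}\in\mathcal{X}_{P(s)}$ there is a (possibly infinite) set $\Gamma(s,x_{P(s)})$ of real-valued functions on $\mathcal{X}_s$ such that $\mathcal{M}_{s\mid x_{P(s)}}$ is exactly the set of real-valued functions $p$ on $\mathcal{X}_s$ with $\sum_{z_s}p(z_s)=1$ and $\sum_{z_s}p(z_s)\gamma(z_s)\geq0$ for all $\gamma\in\Gamma(s,x_{P(s)})$. Then $\mathcal{F}^{\mathrm{irr}}_G(X_G)$ consists exactly of those real-valued functions $P(X_G)$ on $\mathcal{X}_G$ (not required a priori to be non-negative) such that $\sum_{z_G\in\mathcal{X}_G}P(z_G)=1$ and, for all $s\in G$, all $x_{N(s)}\in\mathcal{X}_{N(s)}$ and all $\gamma\in\Gamma(s,x_{P(s)})$, $$\sum_{z_s\in\mathcal{X}_s}\ \sum_{z_{D(s)}\in\mathcal{X}_{D(s)}}P(z_s,z_{D(s)},x_{N(s)})\,\gamma(z_s)\geq 0,$$ where $x_{P(s)}$ is the restriction of $x_{N(s)}$ to $P(s)$.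
   Context: Setting: $G$ is a finite set of nodes forming a DAG. Each node $s\in G$ carries a variable $X_s$ taking values in a finite nonempty set $\mathcal{X}_s$; for $S\subseteq G$, $\mathcal{X}_S=\times_{s\in S}\mathcal{X}_s$ with elements $x_S$. $P(s)$: parents of $s$; $s\sqsubset v$: there is a directed path of positive length from $s$ to $v$; $D(s)=\{v: s\sqsubset v\}$; $N(s)=G\setminus(\{s\}\cup D(s))$. Local models: for every $s$ and $x_{P(s)}$, $\mathcal{M}_{s\mid x_{P(s)}}$ is a nonempty closed convex set of probability mass functions on $\mathcal{X}_s$. A full conditional probability measure on a finite set $\Omega$ is a map $(A,B)\mapsto P(A\mid B)$ defined for $A\subseteq\Omega$ and nonempty $B\subseteq\Omega$ such that (F1) $P(\cdot\mid B)$ is a probability measure with $P(B\mid B)=1$, and (F2) $P(A\cap C\mid B)=P(A\mid C\cap B)P(C\mid B)$ whenever $C\cap B\neq\emptyset$. The event $x_S$ denotes $\{z_G: z_S=x_S\}$; $P(A)=P(A\mid \mathcal{X}_G)$. The irrelevant natural extension $\mathcal{F}^{\mathrm{irr}}_G$ is the set of all full conditional probability measures $P$ on $\mathcal{X}_G$ such that $P(X_s\mid x_{N(s)})\in\mathcal{M}_{s\mid x_{P(s)}}$ for all $s\in G$ and $x_{N(s)}\in\mathcal{X}_{N(s)}$ ($x_{P(s)}$ being the restriction of $x_{N(s)}$). $\mathcal{F}^{\mathrm{irr}}_G(X_G)=\{x_G\mapsto P(x_G): P\in\mathcal{F}^{\mathrm{irr}}_G\}$. *)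

theory Defs
  imports "HOL-Analysis.Analysis"
begin

text \<open>Nodes are the elements of a finite type 'n (so G = UNIV); E is the edge relation
  of the DAG, (u,v) \<in> E meaning u is a parent of v. Xs s is the (finite, nonempty)
  value set of node s; all values live in one ambient type 'v.\<close>

definition parents :: "('n \<times> 'n) set \<Rightarrow> 'n \<Rightarrow> 'n set" where
  "parents E s = {u. (u, s) \<in> E}"

definition desc :: "('n \<times> 'n) set \<Rightarrow> 'n \<Rightarrow> 'n set" where
  "desc E s = {v. (s, v) \<in> E\<^sup>+}"

definition nondesc :: "('n \<times> 'n) set \<Rightarrow> 'n \<Rightarrow> 'n set" where
  "nondesc E s = UNIV - ({s} \<union> desc E s)"

definition joint_space :: "('n \<Rightarrow> 'v set) \<Rightarrow> ('n \<Rightarrow> 'v) set" where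
  "joint_space Xs = Pi UNIV Xs"

definition ev :: "('n \<Rightarrow> 'v set) \<Rightarrow> 'n set \<Rightarrow> ('n \<Rightarrow> 'v) \<Rightarrow> ('n \<Rightarrow> 'v) set" where
  "ev Xs S x = {z \<in> joint_space Xs. \<forall>t\<in>S. z t = x t}"

text \<open>Full conditional probability measure on the finite set \<Omega>
  (only the values on subsets of \<Omega> matter).\<close>
definition full_cond_prob :: "'a set \<Rightarrow> ('a set \<Rightarrow> 'a set \<Rightarrow> real) \<Rightarrow> bool" where
  "full_cond_prob \<Omega> P \<longleftrightarrow>
     (\<forall>B. B \<subseteq> \<Omega> \<and> B \<noteq> {} \<longrightarrow>
        (\<forall>A. A \<subseteq> \<Omega> \<longrightarrow> P A B \<ge> 0) \<and> P \<Omega> B = 1 \<and> P B B = 1 \<and>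
        (\<forall>A C. A \<subseteq> \<Omega> \<and> C \<subseteq> \<Omega> \<and> A \<inter> C = {} \<longrightarrow> P (A \<union> C) B = P A B + P C B)) \<and>
     (\<forall>A B C. A \<subseteq> \<Omega> \<and> B \<subseteq> \<Omega> \<and> C \<subseteq> \<Omega> \<and> C \<inter> B \<noteq> {} \<longrightarrow>
        P (A \<inter> C) B = P A (C \<inter> B) * P C B)"

definition pmfs_on :: "'v set \<Rightarrow> ('v \<Rightarrow> real) set" where
  "pmfs_on V = {p. (\<forall>v. v \<notin> V \<longrightarrow> p v = 0) \<and> (\<forall>v\<in>V. p v \<ge> 0) \<and> sum p V = 1}"

definition convex_fun_set :: "('v \<Rightarrow> real) set \<Rightarrow> bool" where
  "convex_fun_set M \<longleftrightarrow> (\<forall>p\<in>M. \<forall>q\<in>M. \<forall>t::real. 0 \<le> t \<and> t \<le> 1 \<longrightarrow>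
      (\<lambda>v. t * p v + (1 - t) * q v) \<in> M)"

text \<open>Local model M s xp, indexed by the parent assignment xp = x_{P(s)}, represented
  as an element of PiE (parents E s) Xs (i.e. restrict x (parents E s)).\<close>
definition cond_mass :: "('n \<Rightarrow> 'v set) \<Rightarrow> ('n \<times> 'n) set \<Rightarrow> (('n \<Rightarrow> 'v) set \<Rightarrow> ('n \<Rightarrow> 'v) set \<Rightarrow> real)
     \<Rightarrow> 'n \<Rightarrow> ('n \<Rightarrow> 'v) \<Rightarrow> 'v \<Rightarrow> real" where
  "cond_mass Xs E P s x = (\<lambda>v. if v \<in> Xs s then P (ev Xs {s} (x(s := v))) (ev Xs (nondesc E s) x) else 0)"

definition irr_ext :: "('n \<Rightarrow> 'v set) \<Rightarrow> ('n \<times> 'n) set \<Rightarrow> ('n \<Rightarrow> ('n \<Rightarrow> 'v) \<Rightarrow> ('v \<Rightarrow> real) set)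
     \<Rightarrow> (('n \<Rightarrow> 'v) set \<Rightarrow> ('n \<Rightarrow> 'v) set \<Rightarrow> real) set" where
  "irr_ext Xs E M = {P. full_cond_prob (joint_space Xs) P \<and>
      (\<forall>s. \<forall>x\<in>joint_space Xs. cond_mass Xs E P s x \<in> M s (restrict x (parents E s)))}"

definition irr_ext_joint :: "('n \<Rightarrow> 'v set) \<Rightarrow> ('n \<times> 'n) set \<Rightarrow> ('n \<Rightarrow> ('n \<Rightarrow> 'v) \<Rightarrow> ('v \<Rightarrow> real) set)
     \<Rightarrow> (('n \<Rightarrow> 'v) \<Rightarrow> real) set" where
  "irr_ext_joint Xs E M = {p. \<exists>P\<in>irr_ext Xs E M.
      \<forall>x. p x = (if x \<in> joint_space Xs then P {x} (joint_space Xs) else 0)}"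

end

theory Submission
  imports Defs
begin

text \<open>Necessity: the constraint for node s at x is the local constraint applied to the
  conditional P(X_s | x_N(s)), multiplied by P(x_N(s)) \<ge> 0.

  Sufficiency: a real p meeting the constraints is first shown to be nonnegative, by induction
  over ancestral sets, peeling off a sink s. The constraints at s say that every slice of p
  along X_s is a multiple of a member of the local model at s; the multiples have nonnegative
  total by induction, and they are nonnegative themselves unless the local model is a single
  point, in which case the slices add up to a multiple of that point. A full conditional
  measure with joint p is then built lexicographically: p first, and on events of p-probability
  zero a Bayesian network whose local distributions are taken from the local models, its
  configurations ranked by the number of vanishing factors.\<close>

section \<open>Polyhedral credal sets\<close>

locale polyhedral_credal_set =
  fixes X :: "'v set" and \<Gamma> :: "('v \<Rightarrow> real) set" and K :: "('v \<Rightarrow> real) set"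
  assumes finite_X: "finite X"
    and K_nonempty: "K \<noteq> {}"
    and K_pmfs: "K \<subseteq> pmfs_on X"
    and K_eq: "K = {p. (\<forall>v. v \<notin> X \<longrightarrow> p v = 0) \<and> sum p X = 1 \<and>
                       (\<forall>\<gamma>\<in>\<Gamma>. (\<Sum>z\<in>X. p z * \<gamma> z) \<ge> 0)}"
begin

lemma member_nonneg: "m \<in> K \<Longrightarrow> v \<in> X \<Longrightarrow> 0 \<le> m v"
  using K_pmfs unfolding pmfs_on_def by auto

lemma member_sum: "m \<in> K \<Longrightarrow> sum m X = 1"
  using K_eq by auto

lemma member_constraint: "m \<in> K \<Longrightarrow> \<gamma> \<in> \<Gamma> \<Longrightarrow> 0 \<le> (\<Sum>z\<in>X. m z * \<gamma> z)"
  using K_eq by auto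

lemma memberI:
  assumes "sum f X = 1" and "\<And>\<gamma>. \<gamma> \<in> \<Gamma> \<Longrightarrow> 0 \<le> (\<Sum>z\<in>X. f z * \<gamma> z)"
  shows "(\<lambda>v. if v \<in> X then f v else 0) \<in> K"
proof -
  have "(\<Sum>z\<in>X. (if z \<in> X then f z else 0) * \<gamma> z) = (\<Sum>z\<in>X. f z * \<gamma> z)" for \<gamma>
    by (rule sum.cong) auto
  then show ?thesis
    using assms by (subst K_eq) auto
qed

text \<open>The constraints admit no nonzero direction of total mass zero: moving a member of K
  along it would eventually leave the nonnegative orthant.\<close>
lemma zero_sum_direction_vanishes:
  assumes q_sum: "sum q X = 0" and q_cone: "\<And>\<gamma>. \<gamma> \<in> \<Gamma> \<Longrightarrow> 0 \<le> (\<Sum>z\<in>X. q z * \<gamma> z)"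
    and v: "v \<in> X"
  shows "q v = 0"
proof -
  obtain m where m: "m \<in> K" using K_nonempty by blast
  have q_nonneg: "0 \<le> q w" if w: "w \<in> X" for w
  proof (rule ccontr)
    assume "\<not> 0 \<le> q w"
    define t where "t = (m w + 1) / - q w"
    have t: "0 \<le> t" "m w + t * q w = -1"
      using \<open>\<not> 0 \<le> q w\<close> member_nonneg[OF m w] by (auto simp: t_def field_simps)
    have "(\<lambda>u. if u \<in> X then m u + t * q u else 0) \<in> K"
    proof (rule memberI)
      show "(\<Sum>u\<in>X. m u + t * q u) = 1"
        using member_sum[OF m] q_sum by (simp add: sum.distrib sum_distrib_left[symmetric])
      fix \<gamma> assume \<gamma>: "\<gamma> \<in> \<Gamma>"
      have "(\<Sum>z\<in>X. (m z + t * q z) * \<gamma> z) = (\<Sum>z\<in>X. m z * \<gamma> z) + t * (\<Sum>z\<in>X. q z * \<gamma> z)"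
        by (simp add: algebra_simps sum.distrib sum_distrib_left)
      then show "0 \<le> (\<Sum>z\<in>X. (m z + t * q z) * \<gamma> z)"
        using member_constraint[OF m \<gamma>] q_cone[OF \<gamma>] t(1) by simp
    qed
    from member_nonneg[OF this w] t(2) w show False by simp
  qed
  show ?thesis
    using sum_nonneg_eq_0_iff[OF finite_X, of q] q_nonneg q_sum v by auto
qed

lemma nonpos_sum_scales_members:
  assumes r_cone: "\<And>\<gamma>. \<gamma> \<in> \<Gamma> \<Longrightarrow> 0 \<le> (\<Sum>z\<in>X. r z * \<gamma> z)"
    and c: "sum r X \<le> 0" and m: "m \<in> K" and v: "v \<in> X"
  shows "r v = sum r X * m v"
proof -
  let ?c = "sum r X"
  have "r v - ?c * m v = 0"
  proof (rule zero_sum_direction_vanishes[OF _ _ v])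
    show "(\<Sum>z\<in>X. r z - ?c * m z) = 0"
      using member_sum[OF m] by (simp add: sum_subtractf sum_distrib_left[symmetric])
    fix \<gamma> assume \<gamma>: "\<gamma> \<in> \<Gamma>"
    have "(\<Sum>z\<in>X. (r z - ?c * m z) * \<gamma> z) = (\<Sum>z\<in>X. r z * \<gamma> z) - ?c * (\<Sum>z\<in>X. m z * \<gamma> z)"
      by (simp add: algebra_simps sum_subtractf sum_distrib_left)
    moreover have "?c * (\<Sum>z\<in>X. m z * \<gamma> z) \<le> 0"
      using member_constraint[OF m \<gamma>] c by (simp add: mult_nonpos_nonneg)
    ultimately show "0 \<le> (\<Sum>z\<in>X. (r z - ?c * m z) * \<gamma> z)"
      using r_cone[OF \<gamma>] by simp
  qed
  then show ?thesis by simp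
qed

lemma cone_element_scales_member:
  assumes r_cone: "\<And>\<gamma>. \<gamma> \<in> \<Gamma> \<Longrightarrow> 0 \<le> (\<Sum>z\<in>X. r z * \<gamma> z)"
  shows "\<exists>m\<in>K. \<forall>v\<in>X. r v = sum r X * m v"
proof (cases "sum r X > 0")
  case True
  let ?m = "\<lambda>v. if v \<in> X then r v / sum r X else 0"
  have "?m \<in> K"
  proof (rule memberI)
    show "(\<Sum>v\<in>X. r v / sum r X) = 1"
      using True by (simp add: sum_divide_distrib[symmetric])
    fix \<gamma> assume "\<gamma> \<in> \<Gamma>"
    then show "0 \<le> (\<Sum>z\<in>X. r z / sum r X * \<gamma> z)"
      using r_cone True by (simp add: sum_divide_distrib[symmetric])
  qed
  then show ?thesis using True by force
next
  case False
  then show ?thesis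
    using nonpos_sum_scales_members[OF r_cone] K_nonempty by fastforce
qed

text \<open>If some r y has negative mass, K is a single point on X and every r y is a multiple
  of it.\<close>
lemma sum_cone_elements_nonneg:
  assumes "finite T"
    and r_cone: "\<And>y \<gamma>. y \<in> T \<Longrightarrow> \<gamma> \<in> \<Gamma> \<Longrightarrow> 0 \<le> (\<Sum>z\<in>X. r y z * \<gamma> z)"
    and mass: "0 \<le> (\<Sum>y\<in>T. sum (r y) X)" and v: "v \<in> X"
  shows "0 \<le> (\<Sum>y\<in>T. r y v)"
proof (cases "\<forall>y\<in>T. 0 \<le> sum (r y) X")
  case True
  have "0 \<le> r y v" if y: "y \<in> T" for y
  proof -
    obtain m where "m \<in> K" "r y v = sum (r y) X * m v"
      using cone_element_scales_member[OF r_cone[OF y]] v by blast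
    then show ?thesis using True y member_nonneg v by simp
  qed
  then show ?thesis by (simp add: sum_nonneg)
next
  case False
  then obtain y0 where y0: "y0 \<in> T" "sum (r y0) X < 0" by force
  obtain m0 where m0: "m0 \<in> K" using K_nonempty by blast
  have agree: "m v = m0 v" if m: "m \<in> K" for m
    using nonpos_sum_scales_members[OF r_cone[OF y0(1)] _ m v]
      nonpos_sum_scales_members[OF r_cone[OF y0(1)] _ m0 v] y0(2) by simp
  have "r y v = sum (r y) X * m0 v" if y: "y \<in> T" for y
    using cone_element_scales_member[OF r_cone[OF y]] agree v by metis
  then have "(\<Sum>y\<in>T. r y v) = m0 v * (\<Sum>y\<in>T. sum (r y) X)"
    by (simp add: sum_distrib_left mult.commute)
  then show ?thesis using mass member_nonneg[OF m0 v] by simp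
qed

end

section \<open>Full conditional probabilities\<close>

lemma full_cond_probD:
  assumes "full_cond_prob \<Omega> P" and "B \<subseteq> \<Omega>" and "B \<noteq> {}"
  shows full_cond_prob_nonneg: "A \<subseteq> \<Omega> \<Longrightarrow> 0 \<le> P A B"
    and full_cond_prob_space: "P \<Omega> B = 1"
    and full_cond_prob_self: "P B B = 1"
    and full_cond_prob_additive:
      "A \<subseteq> \<Omega> \<Longrightarrow> C \<subseteq> \<Omega> \<Longrightarrow> A \<inter> C = {} \<Longrightarrow> P (A \<union> C) B = P A B + P C B"
  using assms unfolding full_cond_prob_def by simp_all

lemma full_cond_prob_chain:
  assumes "full_cond_prob \<Omega> P" "A \<subseteq> \<Omega>" "B \<subseteq> \<Omega>" "C \<subseteq> \<Omega>" "C \<inter> B \<noteq> {}"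
  shows "P (A \<inter> C) B = P A (C \<inter> B) * P C B"
  using assms unfolding full_cond_prob_def by simp

lemma full_cond_prob_sum_points:
  assumes P: "full_cond_prob \<Omega> P" and B: "B \<subseteq> \<Omega>" "B \<noteq> {}" and A: "finite A" "A \<subseteq> \<Omega>"
  shows "P A B = (\<Sum>z\<in>A. P {z} B)"
  using A
proof (induction A rule: finite_induct)
  case empty
  have "P ({} \<union> {}) B = P {} B + P {} B"
    using full_cond_prob_additive[OF P B] by blast
  then show ?case by simp
next
  case (insert a A)
  then show ?case
    using full_cond_prob_additive[OF P B, of "{a}" A] by simp
qed

lemma full_cond_prob_sum_points_inter:
  assumes P: "full_cond_prob \<Omega> P" and fin: "finite \<Omega>" and B: "B \<subseteq> \<Omega>" "B \<noteq> {}" and A: "A \<subseteq> \<Omega>"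
  shows "P A B = (\<Sum>z\<in>A \<inter> B. P {z} B)"
proof -
  have sum_P: "finite S \<Longrightarrow> S \<subseteq> \<Omega> \<Longrightarrow> P S B = (\<Sum>z\<in>S. P {z} B)" for S
    by (rule full_cond_prob_sum_points[OF P B])
  have "(\<Sum>z\<in>B. P {z} B) + (\<Sum>z\<in>\<Omega> - B. P {z} B) = (\<Sum>z\<in>\<Omega>. P {z} B)"
    by (metis sum.subset_diff[OF B(1) fin] add.commute)
  also have "\<dots> = (\<Sum>z\<in>B. P {z} B)"
    using sum_P[OF fin order_refl] sum_P[OF finite_subset[OF B(1) fin] B(1)]
      full_cond_prob_space[OF P B] full_cond_prob_self[OF P B] by simp
  finally have "(\<Sum>z\<in>\<Omega> - B. P {z} B) = 0" by simp
  then have outside: "P {z} B = 0" if "z \<in> \<Omega> - B" for z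
    using sum_nonneg_eq_0_iff[of "\<Omega> - B" "\<lambda>z. P {z} B"] fin that
      full_cond_prob_nonneg[OF P B] by auto
  have "P A B = (\<Sum>z\<in>A. P {z} B)"
    using sum_P finite_subset[OF A fin] A by blast
  also have "\<dots> = (\<Sum>z\<in>A \<inter> B. P {z} B)"
    using outside A finite_subset[OF A fin] by (intro sum.mono_neutral_right) auto
  finally show ?thesis .
qed

definition lex_level :: "('a \<Rightarrow> nat) \<Rightarrow> 'a set \<Rightarrow> 'a set" where
  "lex_level L B = {z\<in>B. L z = Min (L ` B)}"

definition lex_cond :: "('a \<Rightarrow> nat) \<Rightarrow> ('a \<Rightarrow> real) \<Rightarrow> 'a set \<Rightarrow> 'a set \<Rightarrow> real" where
  "lex_cond L W A B = (\<Sum>z\<in>A \<inter> lex_level L B. W z) / (\<Sum>z\<in>lex_level L B. W z)"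

lemma lex_level_subset: "lex_level L B \<subseteq> B"
  unfolding lex_level_def by auto

lemma lex_level_eq_argmin:
  assumes "finite B" "z0 \<in> B" "\<And>z. z \<in> B \<Longrightarrow> L z0 \<le> L z"
  shows "lex_level L B = {z\<in>B. L z = L z0}"
proof -
  have "Min (L ` B) = L z0"
    using assms by (intro Min_eqI) auto
  then show ?thesis unfolding lex_level_def by simp
qed

lemma lex_level_nonempty: "finite B \<Longrightarrow> B \<noteq> {} \<Longrightarrow> lex_level L B \<noteq> {}"
  unfolding lex_level_def using Min_in[of "L ` B"] by fastforce

lemma lex_level_inter:
  assumes "finite B" and "C \<inter> lex_level L B \<noteq> {}"
  shows "lex_level L (C \<inter> B) = C \<inter> lex_level L B"
proof -
  obtain z0 where z0: "z0 \<in> C \<inter> B" "L z0 = Min (L ` B)"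
    using assms(2) unfolding lex_level_def by auto
  have "L z0 \<le> L z" if "z \<in> C \<inter> B" for z
    using that z0(2) assms(1) by simp
  then have "lex_level L (C \<inter> B) = {z\<in>C \<inter> B. L z = L z0}"
    using assms(1) z0(1) by (intro lex_level_eq_argmin) auto
  then show ?thesis using z0(2) unfolding lex_level_def by auto
qed

lemma full_cond_prob_lex_cond:
  assumes fin: "finite \<Omega>" and W: "\<And>z. z \<in> \<Omega> \<Longrightarrow> 0 < (W z :: real)"
  shows "full_cond_prob \<Omega> (lex_cond L W)"
proof -
  let ?lev = "lex_level L" and ?mass = "\<lambda>S. \<Sum>z\<in>S. W z"
  have fin_lev: "finite (?lev B)" if "B \<subseteq> \<Omega>" for B
    using finite_subset[OF lex_level_subset] finite_subset[OF that fin] by blast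
  have mass_pos: "0 < ?mass (S \<inter> ?lev B)" if "B \<subseteq> \<Omega>" "S \<inter> ?lev B \<noteq> {}" for S B
    using that fin_lev[OF that(1)] lex_level_subset[of L B] W by (intro sum_pos) auto
  have mass_nonneg: "0 \<le> ?mass S" if "S \<subseteq> \<Omega>" for S
    using that W by (intro sum_nonneg) (auto intro: less_imp_le)
  have level_nonempty: "?lev B \<noteq> {}" if "B \<subseteq> \<Omega>" "B \<noteq> {}" for B
    using lex_level_nonempty that finite_subset[OF _ fin] by blast
  show ?thesis
    unfolding full_cond_prob_def
  proof (intro conjI allI impI; (elim conjE)?)
    fix B assume B: "B \<subseteq> \<Omega>" "B \<noteq> {}"
    have D: "0 < ?mass (?lev B)"
      using mass_pos[OF B(1), of UNIV] level_nonempty[OF B] by simp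
    show "0 \<le> lex_cond L W A B" if "A \<subseteq> \<Omega>" for A
      unfolding lex_cond_def using D mass_nonneg[of "A \<inter> ?lev B"] B(1) lex_level_subset[of L B]
      by (intro divide_nonneg_pos) auto
    show "lex_cond L W \<Omega> B = 1" "lex_cond L W B B = 1"
      unfolding lex_cond_def using D B(1) lex_level_subset[of L B]
      by (simp_all add: Int_absorb1)
    show "lex_cond L W (A \<union> C) B = lex_cond L W A B + lex_cond L W C B"
      if "A \<subseteq> \<Omega>" "C \<subseteq> \<Omega>" "A \<inter> C = {}" for A C
    proof -
      have "?mass ((A \<union> C) \<inter> ?lev B) = ?mass (A \<inter> ?lev B) + ?mass (C \<inter> ?lev B)"
        using that fin_lev[OF B(1)] by (simp add: Int_Un_distrib2 sum.union_disjoint disjoint_iff)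
      then show ?thesis unfolding lex_cond_def by (simp add: add_divide_distrib)
    qed
  next
    fix A B C assume ABC: "A \<subseteq> \<Omega>" "B \<subseteq> \<Omega>" "C \<subseteq> \<Omega>" "C \<inter> B \<noteq> {}"
    show "lex_cond L W (A \<inter> C) B = lex_cond L W A (C \<inter> B) * lex_cond L W C B"
    proof (cases "C \<inter> ?lev B = {}")
      case True
      then have "A \<inter> C \<inter> ?lev B = {}" by blast
      then show ?thesis using True unfolding lex_cond_def by (simp add: Int_assoc)
    next
      case False
      have "lex_cond L W A (C \<inter> B) * lex_cond L W C B
          = ?mass (A \<inter> (C \<inter> ?lev B)) / ?mass (C \<inter> ?lev B) * (?mass (C \<inter> ?lev B) / ?mass (?lev B))"
        unfolding lex_cond_def lex_level_inter[OF finite_subset[OF ABC(2) fin] False] ..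
      also have "\<dots> = lex_cond L W (A \<inter> C) B"
        using mass_pos[OF ABC(2) False] unfolding lex_cond_def by (simp add: Int_assoc)
      finally show ?thesis ..
    qed
  qed
qed

section \<open>Credal networks with polyhedral local models\<close>

definition ancestral :: "('n \<times> 'n) set \<Rightarrow> 'n set \<Rightarrow> bool" where
  "ancestral E A \<longleftrightarrow> (\<forall>t\<in>A. parents E t \<subseteq> A)"

locale polyhedral_credal_network =
  fixes E :: "('n::finite \<times> 'n) set"
    and Xs :: "'n \<Rightarrow> 'v set"
    and M :: "'n \<Rightarrow> ('n \<Rightarrow> 'v) \<Rightarrow> ('v \<Rightarrow> real) set"
    and \<Gamma> :: "'n \<Rightarrow> ('n \<Rightarrow> 'v) \<Rightarrow> ('v \<Rightarrow> real) set"
  assumes dag: "acyclic E"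
    and fin: "\<And>s. finite (Xs s)"
    and ne: "\<And>s. Xs s \<noteq> {}"
    and M_ne: "\<And>s xp. xp \<in> PiE (parents E s) Xs \<Longrightarrow> M s xp \<noteq> {}"
    and M_pmf: "\<And>s xp. xp \<in> PiE (parents E s) Xs \<Longrightarrow> M s xp \<subseteq> pmfs_on (Xs s)"
    and M_Gamma: "\<And>s xp. xp \<in> PiE (parents E s) Xs \<Longrightarrow>
        M s xp = {p. (\<forall>v. v \<notin> Xs s \<longrightarrow> p v = 0) \<and> sum p (Xs s) = 1 \<and>
                     (\<forall>\<gamma>\<in>\<Gamma> s xp. (\<Sum>z\<in>Xs s. p z * \<gamma> z) \<ge> 0)}"
begin

abbreviation \<Omega> :: "('n \<Rightarrow> 'v) set" where "\<Omega> \<equiv> joint_space Xs"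

lemma local_model_polyhedral:
  assumes "xp \<in> PiE (parents E s) Xs"
  shows "polyhedral_credal_set (Xs s) (\<Gamma> s xp) (M s xp)"
  by unfold_locales (rule fin M_ne[OF assms] M_pmf[OF assms] M_Gamma[OF assms])+

lemma mem_joint_space: "z \<in> \<Omega> \<longleftrightarrow> (\<forall>t. z t \<in> Xs t)"
  by (simp add: joint_space_def Pi_iff)

lemma finite_joint_space: "finite \<Omega>"
  unfolding joint_space_def PiE_UNIV_domain[symmetric] using fin by (simp add: finite_PiE)

lemma joint_space_nonempty: "\<Omega> \<noteq> {}"
proof -
  have "(\<lambda>t. SOME v. v \<in> Xs t) \<in> \<Omega>"
    using ne unfolding mem_joint_space by (simp add: some_in_eq)
  then show ?thesis by blast
qed

lemma fun_upd_in_joint_space: "x \<in> \<Omega> \<Longrightarrow> v \<in> Xs t \<Longrightarrow> x(t := v) \<in> \<Omega>"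
  unfolding mem_joint_space by auto

lemma restrict_in_PiE: "x \<in> \<Omega> \<Longrightarrow> restrict x S \<in> PiE S Xs"
  unfolding mem_joint_space by (simp add: restrict_PiE_iff)

lemma ev_subset: "ev Xs S x \<subseteq> \<Omega>"
  unfolding ev_def by auto

lemma finite_ev: "finite (ev Xs S x)"
  using finite_subset[OF ev_subset finite_joint_space] .

lemma self_in_ev: "x \<in> \<Omega> \<Longrightarrow> x \<in> ev Xs S x"
  unfolding ev_def by auto

lemma ev_UNIV: "x \<in> \<Omega> \<Longrightarrow> ev Xs UNIV x = {x}"
  unfolding ev_def by auto

lemma ev_empty: "ev Xs {} x = \<Omega>"
  unfolding ev_def by auto

lemma ev_value: "t \<notin> S \<Longrightarrow> {z \<in> ev Xs S x. z t = v} = ev Xs (insert t S) (x(t := v))"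
  unfolding ev_def by auto

lemma sum_by_value:
  assumes "S \<subseteq> \<Omega>"
  shows "(\<Sum>z\<in>S. f z) = (\<Sum>v\<in>Xs t. \<Sum>z\<in>{z\<in>S. z t = v}. f z)"
  using assms finite_subset[OF assms finite_joint_space] fin
  by (intro sum.group[symmetric]) (auto simp: mem_joint_space)

lemma sum_by_value_mult:
  fixes f :: "('n \<Rightarrow> 'v) \<Rightarrow> real"
  assumes "S \<subseteq> \<Omega>"
  shows "(\<Sum>z\<in>S. f z * g (z t)) = (\<Sum>v\<in>Xs t. (\<Sum>z\<in>{z\<in>S. z t = v}. f z) * g v)"
proof -
  have "(\<Sum>z\<in>S. f z * g (z t)) = (\<Sum>v\<in>Xs t. \<Sum>z\<in>{z\<in>S. z t = v}. f z * g (z t))"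
    by (rule sum_by_value[OF assms])
  also have "\<dots> = (\<Sum>v\<in>Xs t. (\<Sum>z\<in>{z\<in>S. z t = v}. f z) * g v)"
    by (simp add: sum_distrib_right)
  finally show ?thesis .
qed

lemma ev_sum_refine:
  assumes SN: "S \<subseteq> N" and x: "x \<in> \<Omega>"
  shows "(\<Sum>z\<in>ev Xs S x. f z)
    = (\<Sum>y\<in>{y\<in>ev Xs S x. \<forall>u. u \<notin> N \<longrightarrow> y u = x u}. \<Sum>z\<in>ev Xs N y. f z)"
proof -
  let ?T = "{y\<in>ev Xs S x. \<forall>u. u \<notin> N \<longrightarrow> y u = x u}"
  let ?merge = "\<lambda>z t. if t \<in> N then z t else x t"
  have merge_T: "?merge ` ev Xs S x \<subseteq> ?T"
    using x SN by (auto simp: ev_def mem_joint_space)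
  have fibre: "{z\<in>ev Xs S x. ?merge z = y} = ev Xs N y" if "y \<in> ?T" for y
    using that SN by (auto simp: ev_def fun_eq_iff)
  have "(\<Sum>z\<in>ev Xs S x. f z) = (\<Sum>y\<in>?T. \<Sum>z\<in>{z\<in>ev Xs S x. ?merge z = y}. f z)"
    by (rule sum.group[symmetric, OF finite_ev finite_subset[OF _ finite_ev] merge_T]) blast
  also have "\<dots> = (\<Sum>y\<in>?T. \<Sum>z\<in>ev Xs N y. f z)"
    using fibre by (intro sum.cong refl) simp
  finally show ?thesis .
qed

lemma ev_insert_sum_refine:
  assumes SN: "S \<subseteq> N" and x: "x \<in> \<Omega>"
  shows "(\<Sum>z\<in>ev Xs (insert t S) x. f z)
    = (\<Sum>y\<in>{y\<in>ev Xs S x. \<forall>u. u \<notin> N \<longrightarrow> y u = x u}. \<Sum>z\<in>{z\<in>ev Xs N y. z t = x t}. f z)"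
proof -
  have "(\<Sum>z\<in>ev Xs (insert t S) x. f z) = (\<Sum>z\<in>ev Xs S x. if z t = x t then f z else 0)"
    by (intro sum.mono_neutral_cong_left finite_ev) (auto simp: ev_def)
  also have "\<dots> = (\<Sum>y\<in>{y\<in>ev Xs S x. \<forall>u. u \<notin> N \<longrightarrow> y u = x u}.
      \<Sum>z\<in>ev Xs N y. if z t = x t then f z else 0)"
    by (rule ev_sum_refine[OF SN x])
  also have "\<dots> = (\<Sum>y\<in>{y\<in>ev Xs S x. \<forall>u. u \<notin> N \<longrightarrow> y u = x u}.
      \<Sum>z\<in>{z\<in>ev Xs N y. z t = x t}. f z)"
    by (simp add: sum.inter_filter[OF finite_ev])
  finally show ?thesis .
qed

lemma exists_source: "U \<noteq> {} \<Longrightarrow> \<exists>t\<in>U. \<forall>u\<in>U. (u, t) \<notin> E"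
  using finite_acyclic_wf[OF finite dag] unfolding wf_eq_minimal by blast

lemma exists_sink: "U \<noteq> {} \<Longrightarrow> \<exists>t\<in>U. \<forall>u\<in>U. (t, u) \<notin> E"
  using finite_acyclic_wf_converse[OF finite dag] unfolding wf_eq_minimal by blast

lemma not_parent_self: "t \<notin> parents E t"
  using dag unfolding acyclic_def parents_def by blast

lemma not_desc_self: "s \<notin> desc E s"
  using dag unfolding acyclic_def desc_def by blast

lemma ancestral_nondesc: "ancestral E (nondesc E s)"
  unfolding ancestral_def parents_def nondesc_def desc_def
  by (auto intro: trancl_into_trancl)

lemma parents_subset_nondesc: "parents E s \<subseteq> nondesc E s"
  using dag unfolding parents_def nondesc_def desc_def acyclic_def
  by (auto intro: trancl_into_trancl)

lemma ancestral_insert_nondesc: "ancestral E (insert s (nondesc E s))"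
  using ancestral_nondesc parents_subset_nondesc unfolding ancestral_def by blast

lemma ancestral_remove_sink:
  assumes A: "ancestral E A" and s: "s \<in> A" "\<forall>u\<in>A. (s, u) \<notin> E"
  shows "ancestral E (A - {s})" and "A - {s} \<subseteq> nondesc E s"
proof -
  show "ancestral E (A - {s})"
    using A s unfolding ancestral_def parents_def by auto
  have "(s, t) \<notin> E\<^sup>+" if t: "t \<in> A" for t
  proof
    assume "(s, t) \<in> E\<^sup>+"
    then obtain c where c: "(s, c) \<in> E" "(c, t) \<in> E\<^sup>*"
      by (meson tranclD)
    have "c \<in> A"
      using c(2) t
    proof (induction rule: converse_rtrancl_induct)
      case (step y z)
      then show ?case using A unfolding ancestral_def parents_def by blast
    qed
    with s c(1) show False by auto
  qed
  then show "A - {s} \<subseteq> nondesc E s"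
    unfolding nondesc_def desc_def by auto
qed

definition admissible :: "(('n \<Rightarrow> 'v) \<Rightarrow> real) \<Rightarrow> bool" where
  "admissible p \<longleftrightarrow> (\<forall>x. x \<notin> \<Omega> \<longrightarrow> p x = 0) \<and> sum p \<Omega> = 1 \<and>
     (\<forall>s. \<forall>x\<in>\<Omega>. \<forall>\<gamma>\<in>\<Gamma> s (restrict x (parents E s)).
        (\<Sum>z\<in>ev Xs (nondesc E s) x. p z * \<gamma> (z s)) \<ge> 0)"

lemma admissibleD:
  assumes "admissible p"
  shows admissible_outside: "x \<notin> \<Omega> \<Longrightarrow> p x = 0"
    and admissible_sum: "sum p \<Omega> = 1"
    and admissible_constraint: "x \<in> \<Omega> \<Longrightarrow> \<gamma> \<in> \<Gamma> s (restrict x (parents E s)) \<Longrightarrow>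
      0 \<le> (\<Sum>z\<in>ev Xs (nondesc E s) x. p z * \<gamma> (z s))"
  using assms unfolding admissible_def by auto

lemma ev_value_nondesc:
  "{z \<in> ev Xs (nondesc E s) x. z s = v} = ev Xs {s} (x(s := v)) \<inter> ev Xs (nondesc E s) x"
  unfolding ev_def nondesc_def by auto

lemma irr_ext_admissible:
  assumes P: "P \<in> irr_ext Xs E M"
  shows "admissible (\<lambda>x. if x \<in> \<Omega> then P {x} \<Omega> else 0)" (is "admissible ?p")
proof -
  have fcp: "full_cond_prob \<Omega> P"
    and cm: "\<And>s x. x \<in> \<Omega> \<Longrightarrow> cond_mass Xs E P s x \<in> M s (restrict x (parents E s))"
    using P unfolding irr_ext_def by auto
  have \<Omega>: "\<Omega> \<subseteq> \<Omega>" "\<Omega> \<noteq> {}" using joint_space_nonempty by auto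
  have "sum ?p \<Omega> = P \<Omega> \<Omega>"
    using full_cond_prob_sum_points_inter[OF fcp finite_joint_space \<Omega> order_refl] by simp
  also have "\<dots> = 1" by (rule full_cond_prob_space[OF fcp \<Omega>])
  finally have sum_p: "sum ?p \<Omega> = 1" .
  have "0 \<le> (\<Sum>z\<in>ev Xs (nondesc E s) x. ?p z * \<gamma> (z s))"
    if x: "x \<in> \<Omega>" and \<gamma>: "\<gamma> \<in> \<Gamma> s (restrict x (parents E s))" for s x \<gamma>
  proof -
    define B where "B = ev Xs (nondesc E s) x"
    define xp where "xp = restrict x (parents E s)"
    have B: "B \<subseteq> \<Omega>" "B \<noteq> {}" using ev_subset self_in_ev[OF x] unfolding B_def by blast+
    interpret K: polyhedral_credal_set "Xs s" "\<Gamma> s xp" "M s xp"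
      using local_model_polyhedral restrict_in_PiE[OF x] unfolding xp_def by blast
    have p_chain: "?p z = P {z} B * P B \<Omega>" if "z \<in> B" for z
      using full_cond_prob_chain[OF fcp _ order_refl B(1), of "{z}"] that B
      by (auto simp: Int_absorb2)
    have cm_v: "cond_mass Xs E P s x v = (\<Sum>z\<in>{z\<in>B. z s = v}. P {z} B)" if "v \<in> Xs s" for v
      using that full_cond_prob_sum_points_inter[OF fcp finite_joint_space B ev_subset]
      unfolding cond_mass_def B_def ev_value_nondesc by simp
    have "(\<Sum>z\<in>B. ?p z * \<gamma> (z s)) = P B \<Omega> * (\<Sum>z\<in>B. P {z} B * \<gamma> (z s))"
      unfolding sum_distrib_left using p_chain by (intro sum.cong) auto
    also have "(\<Sum>z\<in>B. P {z} B * \<gamma> (z s)) = (\<Sum>v\<in>Xs s. cond_mass Xs E P s x v * \<gamma> v)"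
      using sum_by_value_mult[OF B(1), of "\<lambda>z. P {z} B" \<gamma> s] cm_v by simp
    finally have "(\<Sum>z\<in>B. ?p z * \<gamma> (z s)) = P B \<Omega> * (\<Sum>v\<in>Xs s. cond_mass Xs E P s x v * \<gamma> v)" .
    moreover have "0 \<le> P B \<Omega>"
      by (rule full_cond_prob_nonneg[OF fcp \<Omega> B(1)])
    moreover have "0 \<le> (\<Sum>v\<in>Xs s. cond_mass Xs E P s x v * \<gamma> v)"
      using K.member_constraint cm[OF x] \<gamma> unfolding xp_def by blast
    ultimately show ?thesis unfolding B_def by simp
  qed
  then show ?thesis
    unfolding admissible_def using sum_p by auto
qed

text \<open>Induction on an ancestral set A, peeling off a sink s of A: the configurations y of
  the non-descendants N of s give cone elements r y of the local model at s, whose masses are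
  the marginal on A - {s} and whose values at x s sum to the marginal on A.\<close>
lemma admissible_marginal_nonneg:
  assumes p: "admissible p"
  shows "ancestral E A \<Longrightarrow> x \<in> \<Omega> \<Longrightarrow> 0 \<le> (\<Sum>z\<in>ev Xs A x. p z)"
proof (induction "card A" arbitrary: A x rule: less_induct)
  case less
  show ?case
  proof (cases "A = {}")
    case True
    then show ?thesis using admissible_sum[OF p] by (simp add: ev_empty)
  next
    case False
    obtain s where s: "s \<in> A" "\<forall>u\<in>A. (s, u) \<notin> E"
      using exists_sink[OF False] by blast
    define N where "N = nondesc E s"
    define xp where "xp = restrict x (parents E s)"
    define T where "T = {y\<in>ev Xs (A - {s}) x. \<forall>u. u \<notin> N \<longrightarrow> y u = x u}"
    define r where "r y v = (\<Sum>z\<in>{z\<in>ev Xs N y. z s = v}. p z)" for y v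
    have A': "ancestral E (A - {s})" "A - {s} \<subseteq> N"
      using ancestral_remove_sink[OF less.prems(1) s] unfolding N_def by auto
    have parents_s: "parents E s \<subseteq> A - {s}"
      using less.prems(1) s(1) not_parent_self unfolding ancestral_def by blast
    have xs: "x s \<in> Xs s" using less.prems(2) mem_joint_space by blast
    interpret K: polyhedral_credal_set "Xs s" "\<Gamma> s xp" "M s xp"
      using local_model_polyhedral restrict_in_PiE[OF less.prems(2)] unfolding xp_def by blast
    have "insert s (A - {s}) = A" using s(1) by blast
    then have marginal_A: "(\<Sum>z\<in>ev Xs A x. p z) = (\<Sum>y\<in>T. r y (x s))"
      unfolding r_def T_def
      using ev_insert_sum_refine[OF A'(2) less.prems(2), where t = s and f = p] by simp
    have "(\<Sum>y\<in>T. sum (r y) (Xs s)) = (\<Sum>z\<in>ev Xs (A - {s}) x. p z)"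
      unfolding r_def T_def ev_sum_refine[OF A'(2) less.prems(2)]
      by (simp add: sum_by_value[OF ev_subset, symmetric])
    also have "0 \<le> \<dots>"
      by (rule less.hyps[OF card_Diff1_less[OF finite s(1)] A'(1) less.prems(2)])
    finally have mass: "0 \<le> (\<Sum>y\<in>T. sum (r y) (Xs s))" .
    have cone: "0 \<le> (\<Sum>v\<in>Xs s. r y v * \<gamma> v)" if y: "y \<in> T" and \<gamma>: "\<gamma> \<in> \<Gamma> s xp" for y \<gamma>
    proof -
      have "y \<in> \<Omega>" "restrict y (parents E s) = xp"
        using y parents_s unfolding T_def xp_def ev_def by (auto intro!: restrict_ext)
      then have "0 \<le> (\<Sum>z\<in>ev Xs N y. p z * \<gamma> (z s))"
        using admissible_constraint[OF p, of y \<gamma> s] \<gamma> unfolding N_def by simp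
      also have "\<dots> = (\<Sum>v\<in>Xs s. r y v * \<gamma> v)"
        unfolding r_def by (rule sum_by_value_mult[OF ev_subset])
      finally show ?thesis .
    qed
    have "finite T" unfolding T_def using finite_ev by simp
    from K.sum_cone_elements_nonneg[OF this cone mass xs] show ?thesis
      unfolding marginal_A .
  qed
qed

lemma admissible_nonneg:
  assumes p: "admissible p"
  shows "0 \<le> p x"
proof (cases "x \<in> \<Omega>")
  case True
  have "ancestral E UNIV" unfolding ancestral_def by simp
  from admissible_marginal_nonneg[OF p this True] show ?thesis
    by (simp add: ev_UNIV[OF True])
next
  case False
  then show ?thesis by (simp add: admissible_outside[OF p])
qed

section \<open>A full conditional extension of every admissible joint\<close>

definition default_cpt :: "'n \<Rightarrow> ('n \<Rightarrow> 'v) \<Rightarrow> 'v \<Rightarrow> real" where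
  "default_cpt s xp = (SOME m. m \<in> M s xp)"

definition default_factor :: "'n \<Rightarrow> ('n \<Rightarrow> 'v) \<Rightarrow> real" where
  "default_factor t z = default_cpt t (restrict z (parents E t)) (z t)"

lemma default_cpt_in_M: "xp \<in> PiE (parents E s) Xs \<Longrightarrow> default_cpt s xp \<in> M s xp"
  unfolding default_cpt_def using M_ne by (simp add: some_in_eq)

lemma default_cpt_sum: "xp \<in> PiE (parents E s) Xs \<Longrightarrow> sum (default_cpt s xp) (Xs s) = 1"
  using polyhedral_credal_set.member_sum[OF local_model_polyhedral default_cpt_in_M] .

lemma default_factor_nonneg:
  assumes "z \<in> \<Omega>"
  shows "0 \<le> default_factor t z"
  unfolding default_factor_def
  using assms restrict_in_PiE[OF assms]
  by (intro polyhedral_credal_set.member_nonneg[OF local_model_polyhedral default_cpt_in_M])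
    (simp_all add: mem_joint_space)

lemma default_factor_cong:
  "(\<And>u. u \<in> insert t (parents E t) \<Longrightarrow> z u = z' u) \<Longrightarrow> default_factor t z = default_factor t z'"
  unfolding default_factor_def by (metis insertCI restrict_ext)

lemma default_factor_ev:
  assumes "parents E t \<subseteq> S" and "z \<in> ev Xs (insert t S) (x(t := v))"
  shows "default_factor t z = default_cpt t (restrict x (parents E t)) v"
proof -
  have "restrict z (parents E t) = restrict x (parents E t)"
    using assms not_parent_self[of t] unfolding ev_def by (auto intro!: restrict_ext)
  moreover have "z t = v" using assms(2) unfolding ev_def by simp
  ultimately show ?thesis unfolding default_factor_def by simp
qed

lemma default_network_sum:
  "ancestral E A \<Longrightarrow> x \<in> \<Omega> \<Longrightarrow> (\<Sum>z\<in>ev Xs A x. \<Prod>t\<in>-A. default_factor t z) = 1"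
proof (induction "card (-A)" arbitrary: A x rule: less_induct)
  case less
  show ?case
  proof (cases "-A = {}")
    case True
    then have "A = UNIV" by blast
    then show ?thesis using ev_UNIV[OF less.prems(2)] by simp
  next
    case False
    obtain t where t: "t \<in> -A" "\<forall>u\<in>-A. (u, t) \<notin> E"
      using exists_source[OF False] by blast
    define xp where "xp = restrict x (parents E t)"
    have parents_t: "parents E t \<subseteq> A" using t unfolding parents_def by auto
    have A': "ancestral E (insert t A)"
      using less.prems(1) parents_t unfolding ancestral_def by blast
    have card': "card (- insert t A) < card (-A)"
      using card_Diff1_less[OF finite t(1)] by (simp add: Compl_insert)
    have compl: "-A = insert t (- insert t A)" using t(1) by auto
    have "(\<Sum>z\<in>ev Xs A x. \<Prod>u\<in>-A. default_factor u z)
        = (\<Sum>v\<in>Xs t. \<Sum>z\<in>ev Xs (insert t A) (x(t := v)). \<Prod>u\<in>-A. default_factor u z)"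
      using t(1) by (subst sum_by_value[OF ev_subset, where t=t]) (simp add: ev_value)
    also have "\<dots> = (\<Sum>v\<in>Xs t. default_cpt t xp v *
        (\<Sum>z\<in>ev Xs (insert t A) (x(t := v)). \<Prod>u\<in>- insert t A. default_factor u z))"
      unfolding compl sum_distrib_left xp_def
      by (intro sum.cong refl) (simp add: default_factor_ev[OF parents_t])
    also have "\<dots> = (\<Sum>v\<in>Xs t. default_cpt t xp v)"
      using less.hyps[OF card' A'] fun_upd_in_joint_space[OF less.prems(2)] by simp
    also have "\<dots> = 1"
      unfolding xp_def by (rule default_cpt_sum[OF restrict_in_PiE[OF less.prems(2)]])
    finally show ?thesis .
  qed
qed

lemma default_network_local:
  assumes x: "x \<in> \<Omega>" and v: "v \<in> Xs s"
  shows "(\<Sum>z\<in>{z\<in>ev Xs (nondesc E s) x. z s = v}. \<Prod>t\<in>-nondesc E s. default_factor t z)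
    = default_cpt s (restrict x (parents E s)) v"
proof -
  let ?N = "nondesc E s"
  have s: "s \<notin> ?N" "- ?N = insert s (- insert s ?N)"
    unfolding nondesc_def using not_desc_self by auto
  have "(\<Sum>z\<in>{z\<in>ev Xs ?N x. z s = v}. \<Prod>t\<in>-?N. default_factor t z)
      = (\<Sum>z\<in>ev Xs (insert s ?N) (x(s := v)).
           default_cpt s (restrict x (parents E s)) v * (\<Prod>t\<in>- insert s ?N. default_factor t z))"
    unfolding ev_value[OF s(1)] s(2)
    by (intro sum.cong refl) (simp add: default_factor_ev[OF parents_subset_nondesc])
  also have "\<dots> = default_cpt s (restrict x (parents E s)) v"
    using default_network_sum[OF ancestral_insert_nondesc fun_upd_in_joint_space[OF x v]]
    by (simp add: sum_distrib_left[symmetric])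
  finally show ?thesis .
qed

lemma default_factor_ancestral:
  assumes "ancestral E A" "t \<in> A" "z \<in> ev Xs A x"
  shows "default_factor t z = default_factor t x"
  using assms unfolding ancestral_def ev_def by (intro default_factor_cong) blast

definition zero_factors :: "('n \<Rightarrow> 'v) \<Rightarrow> 'n set" where
  "zero_factors z = {t. default_factor t z = 0}"

text \<open>Rank 0 is the support of p, weighted by p itself. Outside it, a configuration is
  ranked by the number of vanishing factors of the default network and weighted by the product
  of the others, so that conditioning on an event of p-mass zero falls back on the default
  network.\<close>
definition lex_rank :: "(('n \<Rightarrow> 'v) \<Rightarrow> real) \<Rightarrow> ('n \<Rightarrow> 'v) \<Rightarrow> nat" where
  "lex_rank p z = (if 0 < p z then 0 else Suc (card (zero_factors z)))"

definition lex_weight :: "(('n \<Rightarrow> 'v) \<Rightarrow> real) \<Rightarrow> ('n \<Rightarrow> 'v) \<Rightarrow> real" where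
  "lex_weight p z = (if 0 < p z then p z else \<Prod>t\<in>-zero_factors z. default_factor t z)"

lemma lex_weight_pos:
  assumes "z \<in> \<Omega>"
  shows "0 < lex_weight p z"
proof -
  have "0 < default_factor t z" if "t \<in> -zero_factors z" for t
    using that default_factor_nonneg[OF assms, of t] unfolding zero_factors_def by auto
  then show ?thesis unfolding lex_weight_def by (auto intro: prod_pos)
qed

lemma lex_level_support:
  assumes "finite B" "z0 \<in> B" "0 < p z0"
  shows "lex_level (lex_rank p) B = {z\<in>B. 0 < p z}"
proof -
  have "lex_level (lex_rank p) B = {z\<in>B. lex_rank p z = lex_rank p z0}"
    using assms by (intro lex_level_eq_argmin) (auto simp: lex_rank_def)
  then show ?thesis using assms(3) by (auto simp: lex_rank_def)
qed

lemma lex_cond_point: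
  assumes p: "admissible p" and x: "x \<in> \<Omega>"
  shows "lex_cond (lex_rank p) (lex_weight p) {x} \<Omega> = p x"
proof -
  have p_nonneg: "\<And>z. 0 \<le> p z" using admissible_nonneg[OF p] .
  have sum_p: "sum p \<Omega> = 1" by (rule admissible_sum[OF p])
  then obtain z0 where z0: "z0 \<in> \<Omega>" "0 < p z0"
    using p_nonneg by (metis less_eq_real_def sum.neutral zero_neq_one)
  let ?lev = "lex_level (lex_rank p) \<Omega>"
  have lev: "?lev = {z\<in>\<Omega>. 0 < p z}"
    by (rule lex_level_support[where p = p, OF finite_joint_space z0])
  have "(\<Sum>z\<in>?lev. lex_weight p z) = sum p \<Omega>"
    unfolding lev lex_weight_def using p_nonneg
    by (intro sum.mono_neutral_cong_left finite_joint_space) (auto simp: less_le)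
  moreover have "(\<Sum>z\<in>{x} \<inter> ?lev. lex_weight p z) = p x"
    using x p_nonneg[of x] unfolding lev lex_weight_def by (cases "0 < p x") auto
  ultimately show ?thesis using sum_p unfolding lex_cond_def by simp
qed

lemma null_event_lex_level:
  assumes x: "x \<in> \<Omega>" and null: "\<forall>z\<in>ev Xs (nondesc E s) x. \<not> 0 < p z"
  shows "lex_level (lex_rank p) (ev Xs (nondesc E s) x)
    = {z\<in>ev Xs (nondesc E s) x. \<forall>t\<in>-nondesc E s. default_factor t z \<noteq> 0}"
proof -
  let ?N = "nondesc E s" let ?B = "ev Xs ?N x"
  let ?zeros = "\<lambda>z. {t\<in>-?N. default_factor t z = 0}"
  have rank: "lex_rank p z = Suc (card {t\<in>?N. default_factor t x = 0} + card (?zeros z))"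
    if z: "z \<in> ?B" for z
  proof -
    have "zero_factors z = {t\<in>?N. default_factor t x = 0} \<union> ?zeros z"
      using default_factor_ancestral[OF ancestral_nondesc _ z] unfolding zero_factors_def by auto
    then show ?thesis
      using null z unfolding lex_rank_def by (simp add: card_Un_disjoint disjoint_iff)
  qed
  have "(\<Sum>z\<in>?B. \<Prod>t\<in>-?N. default_factor t z) = 1"
    by (rule default_network_sum[OF ancestral_nondesc x])
  then obtain z1 where z1: "z1 \<in> ?B" "(\<Prod>t\<in>-?N. default_factor t z1) \<noteq> 0"
    by (metis sum.neutral zero_neq_one)
  then have "?zeros z1 = {}" by auto
  then have rank_z1: "lex_rank p z1 = Suc (card {t\<in>?N. default_factor t x = 0})"
    using rank[OF z1(1)] by simp
  have "lex_rank p z1 \<le> lex_rank p z" if "z \<in> ?B" for z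
    using rank[OF that] rank_z1 by simp
  then have "lex_level (lex_rank p) ?B = {z\<in>?B. lex_rank p z = lex_rank p z1}"
    using z1(1) by (intro lex_level_eq_argmin finite_ev)
  also have "\<dots> = {z\<in>?B. ?zeros z = {}}"
    using rank rank_z1 by auto
  finally show ?thesis by auto
qed

lemma null_event_lex_weight:
  assumes z: "z \<in> ev Xs (nondesc E s) x" and null: "\<not> 0 < p z"
    and nonzero: "\<forall>t\<in>-nondesc E s. default_factor t z \<noteq> 0"
  shows "lex_weight p z = (\<Prod>t\<in>{t\<in>nondesc E s. default_factor t x \<noteq> 0}. default_factor t x)
     * (\<Prod>t\<in>-nondesc E s. default_factor t z)"
proof -
  let ?N = "nondesc E s"
  have "- zero_factors z = {t\<in>?N. default_factor t x \<noteq> 0} \<union> -?N"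
    using default_factor_ancestral[OF ancestral_nondesc _ z] nonzero
    unfolding zero_factors_def by auto
  then have "lex_weight p z
      = (\<Prod>t\<in>{t\<in>?N. default_factor t x \<noteq> 0}. default_factor t z) * (\<Prod>t\<in>-?N. default_factor t z)"
    using null unfolding lex_weight_def by (simp add: prod.union_disjoint disjoint_iff)
  also have "(\<Prod>t\<in>{t\<in>?N. default_factor t x \<noteq> 0}. default_factor t z)
      = (\<Prod>t\<in>{t\<in>?N. default_factor t x \<noteq> 0}. default_factor t x)"
    using default_factor_ancestral[OF ancestral_nondesc _ z] by (intro prod.cong) auto
  finally show ?thesis .
qed

lemma cond_mass_lex_cond:
  "cond_mass Xs E (lex_cond L W) s x = (\<lambda>v. if v \<in> Xs s then
     (\<Sum>z\<in>{z\<in>lex_level L (ev Xs (nondesc E s) x). z s = v}. W z) /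
     (\<Sum>z\<in>lex_level L (ev Xs (nondesc E s) x). W z) else 0)"
proof -
  have "ev Xs {s} (x(s := v)) \<inter> lex_level L (ev Xs (nondesc E s) x)
      = {z\<in>lex_level L (ev Xs (nondesc E s) x). z s = v}" for v
    using lex_level_subset[of L "ev Xs (nondesc E s) x"] ev_subset by (auto simp: ev_def)
  then show ?thesis unfolding cond_mass_def lex_cond_def by (simp only:)
qed

lemma weighted_mass_in_M:
  assumes xp: "xp \<in> PiE (parents E s) Xs" and S: "S \<subseteq> \<Omega>" and D: "0 < sum w S"
    and cone: "\<And>\<gamma>. \<gamma> \<in> \<Gamma> s xp \<Longrightarrow> 0 \<le> (\<Sum>z\<in>S. w z * \<gamma> (z s))"
  shows "(\<lambda>v. if v \<in> Xs s then (\<Sum>z\<in>{z\<in>S. z s = v}. w z) / sum w S else 0) \<in> M s xp"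
proof (rule polyhedral_credal_set.memberI[OF local_model_polyhedral[OF xp]])
  show "(\<Sum>v\<in>Xs s. (\<Sum>z\<in>{z\<in>S. z s = v}. w z) / sum w S) = 1"
    using D by (simp add: sum_divide_distrib[symmetric] sum_by_value[OF S, symmetric])
  fix \<gamma> assume "\<gamma> \<in> \<Gamma> s xp"
  have "(\<Sum>v\<in>Xs s. (\<Sum>z\<in>{z\<in>S. z s = v}. w z) / sum w S * \<gamma> v)
      = (\<Sum>z\<in>S. w z * \<gamma> (z s)) / sum w S"
    unfolding sum_by_value_mult[OF S, of w \<gamma> s] by (simp add: sum_divide_distrib[symmetric])
  then show "0 \<le> (\<Sum>v\<in>Xs s. (\<Sum>z\<in>{z\<in>S. z s = v}. w z) / sum w S * \<gamma> v)"
    using cone[OF \<open>\<gamma> \<in> \<Gamma> s xp\<close>] D by simp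
qed

lemma null_event_lex_constraint:
  assumes x: "x \<in> \<Omega>" and null: "\<forall>z\<in>ev Xs (nondesc E s) x. \<not> 0 < p z"
    and \<gamma>: "\<gamma> \<in> \<Gamma> s (restrict x (parents E s))"
  shows "0 \<le> (\<Sum>z\<in>lex_level (lex_rank p) (ev Xs (nondesc E s) x). lex_weight p z * \<gamma> (z s))"
proof -
  let ?N = "nondesc E s" let ?B = "ev Xs ?N x"
  let ?lev = "lex_level (lex_rank p) ?B"
  define xp where "xp = restrict x (parents E s)"
  have xp: "xp \<in> PiE (parents E s) Xs" unfolding xp_def by (rule restrict_in_PiE[OF x])
  define C where "C = (\<Prod>t\<in>{t\<in>?N. default_factor t x \<noteq> 0}. default_factor t x)"
  let ?f = "\<lambda>z. \<Prod>t\<in>-?N. default_factor t z"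
  have "(\<Sum>z\<in>?lev. lex_weight p z * \<gamma> (z s)) = C * (\<Sum>z\<in>?lev. ?f z * \<gamma> (z s))"
    unfolding null_event_lex_level[OF x null] sum_distrib_left C_def using null
    by (intro sum.cong refl) (simp add: null_event_lex_weight)
  also have "(\<Sum>z\<in>?lev. ?f z * \<gamma> (z s)) = (\<Sum>z\<in>?B. ?f z * \<gamma> (z s))"
    unfolding null_event_lex_level[OF x null]
    by (intro sum.mono_neutral_left finite_ev) auto
  also have "\<dots> = (\<Sum>v\<in>Xs s. default_cpt s xp v * \<gamma> v)"
    unfolding sum_by_value_mult[OF ev_subset, of ?f \<gamma> s] xp_def
    using default_network_local[OF x] by simp
  finally have eq: "(\<Sum>z\<in>?lev. lex_weight p z * \<gamma> (z s))
      = C * (\<Sum>v\<in>Xs s. default_cpt s xp v * \<gamma> v)" .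
  have "0 \<le> C" unfolding C_def using default_factor_nonneg[OF x] by (simp add: prod_nonneg)
  moreover have "0 \<le> (\<Sum>v\<in>Xs s. default_cpt s xp v * \<gamma> v)"
    using \<gamma> unfolding xp_def[symmetric]
    by (rule polyhedral_credal_set.member_constraint[OF local_model_polyhedral[OF xp] default_cpt_in_M[OF xp]])
  ultimately show ?thesis unfolding eq by simp
qed

lemma lex_level_constraint:
  assumes p: "admissible p" and x: "x \<in> \<Omega>" and \<gamma>: "\<gamma> \<in> \<Gamma> s (restrict x (parents E s))"
  shows "0 \<le> (\<Sum>z\<in>lex_level (lex_rank p) (ev Xs (nondesc E s) x). lex_weight p z * \<gamma> (z s))"
proof (cases "\<exists>z0\<in>ev Xs (nondesc E s) x. 0 < p z0")
  case True
  let ?B = "ev Xs (nondesc E s) x"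
  obtain z0 where "z0 \<in> ?B" "0 < p z0" using True by blast
  then have lev: "lex_level (lex_rank p) ?B = {z\<in>?B. 0 < p z}"
    by (rule lex_level_support[OF finite_ev])
  have "(\<Sum>z\<in>lex_level (lex_rank p) ?B. lex_weight p z * \<gamma> (z s)) = (\<Sum>z\<in>?B. p z * \<gamma> (z s))"
    unfolding lev lex_weight_def using admissible_nonneg[OF p]
    by (intro sum.mono_neutral_cong_left finite_ev) (auto simp: less_le)
  also have "0 \<le> \<dots>" by (rule admissible_constraint[OF p x \<gamma>])
  finally show ?thesis .
next
  case False
  then show ?thesis using null_event_lex_constraint[OF x _ \<gamma>] by blast
qed

lemma lex_cond_mass_in_M:
  assumes p: "admissible p" and x: "x \<in> \<Omega>"
  shows "cond_mass Xs E (lex_cond (lex_rank p) (lex_weight p)) s x \<in> M s (restrict x (parents E s))"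
proof -
  let ?lev = "lex_level (lex_rank p) (ev Xs (nondesc E s) x)"
  have lev: "?lev \<subseteq> \<Omega>" by (rule order_trans[OF lex_level_subset ev_subset])
  have "?lev \<noteq> {}" using lex_level_nonempty[OF finite_ev] self_in_ev[OF x] by blast
  then have "0 < (\<Sum>z\<in>?lev. lex_weight p z)"
    using lev lex_weight_pos finite_subset[OF lev finite_joint_space] by (intro sum_pos) auto
  from weighted_mass_in_M[OF restrict_in_PiE[OF x] lev this lex_level_constraint[OF p x]]
  show ?thesis unfolding cond_mass_lex_cond .
qed

lemma admissible_in_irr_ext_joint:
  assumes p: "admissible p"
  shows "p \<in> irr_ext_joint Xs E M"
proof -
  let ?P = "lex_cond (lex_rank p) (lex_weight p)"
  have "full_cond_prob \<Omega> ?P"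
    by (rule full_cond_prob_lex_cond[OF finite_joint_space lex_weight_pos])
  then have "?P \<in> irr_ext Xs E M"
    unfolding irr_ext_def using lex_cond_mass_in_M[OF p] by blast
  moreover have "p x = (if x \<in> \<Omega> then ?P {x} \<Omega> else 0)" for x
    using lex_cond_point[OF p] admissible_outside[OF p] by auto
  ultimately show ?thesis unfolding irr_ext_joint_def by blast
qed

lemma irr_ext_joint_eq: "irr_ext_joint Xs E M = Collect admissible"
proof (intro set_eqI iffI)
  fix p assume "p \<in> irr_ext_joint Xs E M"
  then obtain P where "P \<in> irr_ext Xs E M" "p = (\<lambda>x. if x \<in> \<Omega> then P {x} \<Omega> else 0)"
    unfolding irr_ext_joint_def by blast
  then show "p \<in> Collect admissible" using irr_ext_admissible by simp
qed (simp add: admissible_in_irr_ext_joint)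

end

theorem theorem1:
  fixes E :: "('n::finite \<times> 'n) set"
    and Xs :: "'n \<Rightarrow> 'v set"
    and M :: "'n \<Rightarrow> ('n \<Rightarrow> 'v) \<Rightarrow> ('v \<Rightarrow> real) set"
    and \<Gamma> :: "'n \<Rightarrow> ('n \<Rightarrow> 'v) \<Rightarrow> ('v \<Rightarrow> real) set"
  assumes dag: "acyclic E"
    and fin: "\<And>s. finite (Xs s)"
    and ne: "\<And>s. Xs s \<noteq> {}"
    and M_ne: "\<And>s xp. xp \<in> PiE (parents E s) Xs \<Longrightarrow> M s xp \<noteq> {}"
    and M_pmf: "\<And>s xp. xp \<in> PiE (parents E s) Xs \<Longrightarrow> M s xp \<subseteq> pmfs_on (Xs s)"
    and M_closed: "\<And>s xp. xp \<in> PiE (parents E s) Xs \<Longrightarrow> closed (M s xp)"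
    and M_convex: "\<And>s xp. xp \<in> PiE (parents E s) Xs \<Longrightarrow> convex_fun_set (M s xp)"
    and M_Gamma: "\<And>s xp. xp \<in> PiE (parents E s) Xs \<Longrightarrow>
        M s xp = {p. (\<forall>v. v \<notin> Xs s \<longrightarrow> p v = 0) \<and> sum p (Xs s) = 1 \<and>
                     (\<forall>\<gamma>\<in>\<Gamma> s xp. (\<Sum>z\<in>Xs s. p z * \<gamma> z) \<ge> 0)}"
  shows "irr_ext_joint Xs E M =
     {p. (\<forall>x. x \<notin> joint_space Xs \<longrightarrow> p x = 0) \<and> sum p (joint_space Xs) = 1 \<and>
         (\<forall>s. \<forall>x\<in>joint_space Xs. \<forall>\<gamma>\<in>\<Gamma> s (restrict x (parents E s)).
            (\<Sum>z\<in>ev Xs (nondesc E s) x. p z * \<gamma> (z s)) \<ge> 0)}"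
proof -
  interpret polyhedral_credal_network E Xs M \<Gamma>
    by unfold_locales (fact dag fin ne M_ne M_pmf M_Gamma)+
  show ?thesis
    unfolding irr_ext_joint_eq admissible_def ..
qed

end
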